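(* For $\theta>0$ let $U_1,U_2,\dots$ be i.i.d. $\mathrm{Beta}(1,\theta)$ random variables, and set $X_1=U_1$, $X_k=(1-U_1)\cdots(1-U_{k-1})U_k$ for $k\ge2$. Fix $n\ge1$ and let $\Pi^{\mathrm{gem}}_{n,\theta}$ be the law of $(X_1,\dots,X_n)$ on $\Delta_n=\{(x_1,\dots,x_n):x_k\ge0,\ \sum_{i=1}^n x_i\le1\}$. Then, as $\theta\to\infty$, $\{\Pi^{\mathrm{gem}}_{n,\theta}:\theta>0\}$ satisfies an LDP on $\Delta_n$ with speed $\theta$ and rate function $$S_n(\mathbf x)=\begin{cases}\log\dfrac1{1-\sum_{k=1}^n x_k},&\mathbf x\in\Delta_n,\ \sum_{k=1}^n x_k<1,\\ \infty,&\text{otherwise}.\end{cases}$$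
   Context: An LDP with speed $\theta$ uses normalization $\theta^{-1}\log$ as $\theta\to\infty$. *)

theory Defs
  imports "HOL-Probability.Probability"
begin

definition beta1 :: "real \<Rightarrow> real measure" where
  "beta1 \<theta> = density lborel
     (\<lambda>u. ennreal (indicator {0<..<1} u * \<theta> * (1 - u) powr (\<theta> - 1)))"

text \<open>Points of R^n are functions nat => real vanishing outside {0..<n}
  (coordinate k-1 of the paper is index k here); topology = product topology.\<close>
definition simplex_n :: "nat \<Rightarrow> (nat \<Rightarrow> real) set" where
  "simplex_n n = {x. (\<forall>k. 0 \<le> x k) \<and> (\<forall>k\<ge>n. x k = 0) \<and> (\<Sum>k<n. x k) \<le> 1}"

definition gem_map :: "nat \<Rightarrow> (nat \<Rightarrow> real) \<Rightarrow> (nat \<Rightarrow> real)" where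
  "gem_map n u = (\<lambda>k. if k < n then (\<Prod>i<k. 1 - u i) * u k else 0)"

definition gem_law :: "nat \<Rightarrow> real \<Rightarrow> (nat \<Rightarrow> real) measure" where
  "gem_law n \<theta> = distr (PiM {..<n} (\<lambda>_. beta1 \<theta>)) borel (gem_map n)"

definition gem_rate :: "nat \<Rightarrow> (nat \<Rightarrow> real) \<Rightarrow> ereal" where
  "gem_rate n x = (if x \<in> simplex_n n \<and> (\<Sum>k<n. x k) < 1
      then ereal (ln (1 / (1 - (\<Sum>k<n. x k)))) else \<infinity>)"

definition ldp_log :: "real \<Rightarrow> real \<Rightarrow> ereal" where
  "ldp_log \<theta> p = (if p = 0 then -\<infinity> else ereal (ln p / \<theta>))"

definition rate_function :: "'a topology \<Rightarrow> ('a \<Rightarrow> ereal) \<Rightarrow> bool" where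
  "rate_function X I \<longleftrightarrow> (\<forall>x\<in>topspace X. 0 \<le> I x) \<and>
     (\<forall>c::real. closedin X {x\<in>topspace X. I x \<le> ereal c})"

definition LDP :: "'a topology \<Rightarrow> (real \<Rightarrow> 'a measure) \<Rightarrow> ('a \<Rightarrow> ereal) \<Rightarrow> bool" where
  "LDP X P I \<longleftrightarrow> rate_function X I \<and>
     (\<forall>C. closedin X C \<longrightarrow>
        Limsup at_top (\<lambda>\<theta>. ldp_log \<theta> (measure (P \<theta>) C)) \<le> - (INF x\<in>C. I x)) \<and>
     (\<forall>G. openin X G \<longrightarrow>
        - (INF x\<in>G. I x) \<le> Liminf at_top (\<lambda>\<theta>. ldp_log \<theta> (measure (P \<theta>) G)))"

end

theory Submission
  imports Defs "HOL-Real_Asymp.Real_Asymp"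
begin

text \<open>Stick-breaking telescopes: \<open>1 - \<Sum>\<^sub>k X\<^sub>k = \<Prod>\<^sub>k (1 - U\<^sub>k)\<close>, a product of independent
  factors. Upper bound: \<open>E (1 - U\<^sub>k) powr (1 - \<theta>) = \<theta>\<close>, so by Markov's inequality
  \<open>P(\<Prod>\<^sub>k (1 - U\<^sub>k) \<le> q) \<le> \<theta>\<^sup>n q powr (\<theta> - 1)\<close>, whose normalized logarithm tends to \<open>ln q\<close>.
  Lower bound: if \<open>\<Sum>\<^sub>k x\<^sub>k < 1\<close>, the stick-breaking map sends a small box
  \<open>\<Prod>\<^sub>k ]u\<^sub>k, u\<^sub>k + \<delta>]\<close> around the fractions \<open>u\<close> of \<open>x\<close> into any neighbourhood of \<open>x\<close>; for
  \<open>\<theta> \<delta> \<ge> 1\<close> the box has probability at least \<open>(\<Prod>\<^sub>k (1 - u\<^sub>k - \<delta>)) powr \<theta>\<close>, and the base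
  tends to \<open>\<Prod>\<^sub>k (1 - u\<^sub>k) = 1 - \<Sum>\<^sub>k x\<^sub>k\<close> as \<open>\<delta> \<rightarrow> 0\<close>.\<close>

section \<open>The Beta(1,\<theta>) distribution\<close>

lemma space_beta1 [simp]: "space (beta1 t) = UNIV"
  by (simp add: beta1_def)

lemma sets_beta1 [simp, measurable_cong]: "sets (beta1 t) = sets borel"
  by (simp add: beta1_def)

lemma nn_integral_indicator_Ioo_01:
  assumes "0 \<le> t"
  shows "(\<integral>\<^sup>+u. ennreal (t * indicator {0<..<1::real} u) \<partial>lborel) = ennreal t"
proof -
  have "(\<integral>\<^sup>+u. indicator {0<..<1::real} u \<partial>lborel) = 1"
    by (subst nn_integral_indicator) auto
  then show ?thesis
    using assms by (simp add: nn_integral_cmult ennreal_mult flip: ennreal_indicator)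
qed

lemma finite_measure_beta1:
  assumes "1 \<le> t"
  shows "finite_measure (beta1 t)"
proof (rule finite_measureI)
  have "emeasure (beta1 t) (space (beta1 t))
      = (\<integral>\<^sup>+u. ennreal (indicator {0<..<1} u * t * (1 - u) powr (t - 1)) \<partial>lborel)"
    unfolding beta1_def by (simp add: emeasure_density)
  also have "\<dots> \<le> (\<integral>\<^sup>+(u::real). ennreal (t * indicator {0<..<1} u) \<partial>lborel)"
  proof (rule nn_integral_mono)
    fix u :: real
    show "ennreal (indicator {0<..<1} u * t * (1 - u) powr (t - 1)) \<le> ennreal (t * indicator {0<..<1} u)"
    proof (cases "u \<in> {0<..<1}")
      case True
      then have "(1 - u) powr (t - 1) \<le> 1"
        using assms by (intro powr_le1) auto
      then show ?thesis
        using True assms by (simp add: ennreal_leI)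
    qed simp
  qed
  also have "\<dots> = ennreal t"
    using assms by (simp add: nn_integral_indicator_Ioo_01)
  finally show "emeasure (beta1 t) (space (beta1 t)) \<noteq> \<infinity>"
    by (auto simp: top_unique)
qed

lemma measure_beta1_Ioc_ge:
  assumes "1 \<le> t" "0 \<le> a" "a < b" "b < 1"
  shows "t * (1 - b) powr (t - 1) * (b - a) \<le> measure (beta1 t) {a<..b}"
proof -
  interpret finite_measure "beta1 t"
    using assms(1) by (rule finite_measure_beta1)
  define K where "K = t * (1 - b) powr (t - 1)"
  have "(\<integral>\<^sup>+u. indicator {a<..b} u \<partial>lborel) = ennreal (b - a)"
    using assms by (subst nn_integral_indicator) auto
  then have "ennreal (K * (b - a)) = (\<integral>\<^sup>+u. ennreal (K * indicator {a<..b} u) \<partial>lborel)"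
    using assms by (simp add: K_def nn_integral_cmult ennreal_mult flip: ennreal_indicator)
  also have "\<dots> \<le> (\<integral>\<^sup>+u. ennreal (indicator {0<..<1} u * t * (1 - u) powr (t - 1))
                         * indicator {a<..b} u \<partial>lborel)"
  proof (rule nn_integral_mono)
    fix u :: real
    show "ennreal (K * indicator {a<..b} u)
        \<le> ennreal (indicator {0<..<1} u * t * (1 - u) powr (t - 1)) * indicator {a<..b} u"
    proof (cases "u \<in> {a<..b}")
      case True
      then have "(1 - b) powr (t - 1) \<le> (1 - u) powr (t - 1)"
        using assms by (intro powr_mono2) auto
      then show ?thesis
        using True assms by (auto simp: K_def intro!: ennreal_leI)
    qed simp
  qed
  also have "\<dots> = emeasure (beta1 t) {a<..b}"
    unfolding beta1_def by (subst emeasure_density) auto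
  finally show ?thesis
    using assms by (simp add: K_def emeasure_eq_measure ennreal_le_iff)
qed

lemma finite_measure_PiM_power:
  assumes "finite I" "finite_measure M"
  shows "finite_measure (PiM I (\<lambda>_. M))"
proof (rule finite_measureI)
  interpret M: finite_measure M by fact
  interpret product_sigma_finite "\<lambda>_. M"
    by (simp add: product_sigma_finite_def M.sigma_finite_measure_axioms)
  have "emeasure (PiM I (\<lambda>_. M)) (space (PiM I (\<lambda>_. M))) = (\<Prod>i\<in>I. emeasure M (space M))"
    unfolding space_PiM using assms(1) by (subst emeasure_PiM) auto
  then show "emeasure (PiM I (\<lambda>_. M)) (space (PiM I (\<lambda>_. M))) \<noteq> \<infinity>"
    using M.emeasure_finite[of "space M"] by (simp add: power_eq_top_ennreal)
qed

lemma measure_PiM_PiE_power: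
  assumes "finite I" "finite_measure M" "\<And>i. i \<in> I \<Longrightarrow> A i \<in> sets M"
  shows "measure (PiM I (\<lambda>_. M)) (Pi\<^sub>E I A) = (\<Prod>i\<in>I. measure M (A i))"
proof -
  interpret M: finite_measure M by fact
  interpret product_sigma_finite "\<lambda>_. M"
    by (simp add: product_sigma_finite_def M.sigma_finite_measure_axioms)
  have "emeasure (PiM I (\<lambda>_. M)) (Pi\<^sub>E I A) = ennreal (\<Prod>i\<in>I. measure M (A i))"
    using assms by (simp add: emeasure_PiM M.emeasure_eq_measure prod_ennreal)
  then show ?thesis
    by (simp add: measure_def prod_nonneg)
qed

section \<open>The stick-breaking map\<close>

lemma sum_stick_breaking:
  fixes u :: "nat \<Rightarrow> 'a :: comm_ring_1"
  shows "(\<Sum>k<m. (\<Prod>i<k. 1 - u i) * u k) = 1 - (\<Prod>i<m. 1 - u i)"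
  by (induction m) (auto simp: algebra_simps)

lemma sum_gem_map: "(\<Sum>k<n. gem_map n u k) = 1 - (\<Prod>i<n. 1 - u i)"
  using sum_stick_breaking[of u n] by (simp add: gem_map_def)

lemma gem_map_in_simplex_n:
  assumes "\<And>i. i < n \<Longrightarrow> 0 \<le> u i \<and> u i \<le> 1"
  shows "gem_map n u \<in> simplex_n n"
proof -
  have prod: "0 \<le> (\<Prod>i<k. 1 - u i) \<and> (\<Prod>i<k. 1 - u i) \<le> 1" if "k \<le> n" for k
    using that assms by (auto intro!: prod_nonneg prod_le_1)
  have "(\<Sum>k<n. gem_map n u k) \<le> 1"
    using prod[of n] by (simp add: sum_gem_map)
  then show ?thesis
    unfolding simplex_n_def using prod assms by (auto simp: gem_map_def)
qed

lemma abs_prod_diff_le_sum: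
  fixes a b :: "'i \<Rightarrow> real"
  assumes "finite A" "\<And>i. i \<in> A \<Longrightarrow> \<bar>a i\<bar> \<le> 1 \<and> \<bar>b i\<bar> \<le> 1"
  shows "\<bar>prod a A - prod b A\<bar> \<le> (\<Sum>i\<in>A. \<bar>a i - b i\<bar>)"
  using assms
proof (induction A rule: finite_induct)
  case (insert x F)
  have "\<bar>prod b F\<bar> \<le> 1"
    unfolding abs_prod using insert.prems by (intro prod_le_1) auto
  moreover have "\<bar>a x\<bar> \<le> 1"
    using insert.prems by auto
  moreover have "\<bar>prod a F - prod b F\<bar> \<le> (\<Sum>i\<in>F. \<bar>a i - b i\<bar>)"
    using insert.IH insert.prems by auto
  ultimately have "\<bar>a x\<bar> * \<bar>prod a F - prod b F\<bar> + \<bar>a x - b x\<bar> * \<bar>prod b F\<bar>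
      \<le> (\<Sum>i\<in>F. \<bar>a i - b i\<bar>) + \<bar>a x - b x\<bar>"
    by (intro add_mono order.trans[OF mult_left_le_one_le] mult_right_le_one_le) auto
  moreover have "\<bar>a x * prod a F - b x * prod b F\<bar>
      \<le> \<bar>a x * (prod a F - prod b F)\<bar> + \<bar>(a x - b x) * prod b F\<bar>"
    by (rule order.trans[OF eq_refl abs_triangle_ineq]) (simp add: algebra_simps)
  ultimately show ?case
    using insert.hyps by (simp add: abs_mult add.commute)
qed simp

lemma abs_gem_map_diff_le:
  assumes "\<And>i. i < n \<Longrightarrow> 0 \<le> u i \<and> u i \<le> 1 \<and> 0 \<le> v i \<and> v i \<le> 1"
  shows "\<bar>gem_map n u k - gem_map n v k\<bar> \<le> (\<Sum>i<n. \<bar>u i - v i\<bar>)"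
proof (cases "k < n")
  case True
  define f where "f w i = (if i < k then 1 - w i else w i)" for w :: "nat \<Rightarrow> real" and i
  have gem: "gem_map n w k = (\<Prod>i<Suc k. f w i)" for w
    using True by (simp add: gem_map_def f_def)
  have "\<bar>gem_map n u k - gem_map n v k\<bar> \<le> (\<Sum>i<Suc k. \<bar>f u i - f v i\<bar>)"
    unfolding gem using True assms by (intro abs_prod_diff_le_sum) (auto simp: f_def)
  also have "\<dots> = (\<Sum>i<Suc k. \<bar>u i - v i\<bar>)"
    by (intro sum.cong) (auto simp: f_def)
  also have "\<dots> \<le> (\<Sum>i<n. \<bar>u i - v i\<bar>)"
    using True by (intro sum_mono2) auto
  finally show ?thesis .
qed (simp add: gem_map_def sum_nonneg)

lemma gem_map_measurable:
  "gem_map n \<in> borel_measurable (PiM {..<n} (\<lambda>_. beta1 t))"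
proof (rule measurable_coordinatewise_then_product)
  have coord: "(\<lambda>x. x i) \<in> borel_measurable (PiM {..<n} (\<lambda>_. beta1 t))" if "i < n" for i
  proof -
    have "(\<lambda>x. x i) \<in> PiM {..<n} (\<lambda>_. beta1 t) \<rightarrow>\<^sub>M beta1 t"
      using that by (intro measurable_component_singleton) simp
    then show ?thesis
      by (simp only: measurable_cong_sets[OF refl sets_beta1])
  qed
  fix k
  show "(\<lambda>x. gem_map n x k) \<in> borel_measurable (PiM {..<n} (\<lambda>_. beta1 t))"
  proof (cases "k < n")
    case True
    then show ?thesis
      unfolding gem_map_def
      by (simp only: if_P) (intro borel_measurable_times borel_measurable_prod
          borel_measurable_diff borel_measurable_const coord; simp)
  qed (simp add: gem_map_def)
qed

lemma closed_simplex_n: "closed (simplex_n n)"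
proof -
  have "simplex_n n = (\<Inter>k. {x. 0 \<le> x k}) \<inter> (\<Inter>k\<in>{n..}. {x. x k = 0}) \<inter> {x. (\<Sum>k<n. x k) \<le> 1}"
    unfolding simplex_n_def by auto
  then show ?thesis
    by (simp only:) (intro closed_Int closed_INT ballI; intro closed_Collect_le closed_Collect_eq
        continuous_on_const continuous_on_sum continuous_on_product_coordinates)
qed

section \<open>The rate function\<close>

lemma gem_rate_eq:
  assumes "x \<in> simplex_n n" "(\<Sum>k<n. x k) < 1"
  shows "gem_rate n x = ereal (- ln (1 - (\<Sum>k<n. x k)))"
  using assms by (simp add: gem_rate_def ln_div)

lemma simplex_n_sum_bounds:
  assumes "x \<in> simplex_n n"
  shows "0 \<le> (\<Sum>k<n. x k)" "(\<Sum>k<n. x k) \<le> 1"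
  using assms by (auto simp: simplex_n_def intro: sum_nonneg)

lemma gem_rate_le_iff:
  assumes "x \<in> simplex_n n"
  shows "gem_rate n x \<le> ereal c \<longleftrightarrow> exp (- c) \<le> 1 - (\<Sum>k<n. x k)"
proof (cases "(\<Sum>k<n. x k) < 1")
  case True
  then have "gem_rate n x \<le> ereal c \<longleftrightarrow> - c \<le> ln (1 - (\<Sum>k<n. x k))"
    using assms by (auto simp: gem_rate_eq)
  also have "\<dots> \<longleftrightarrow> exp (- c) \<le> 1 - (\<Sum>k<n. x k)"
    using True by (simp add: ln_ge_iff)
  finally show ?thesis .
next
  case False
  then show ?thesis
    using simplex_n_sum_bounds(2)[OF assms] exp_gt_zero[of "- c"] by (simp add: gem_rate_def, linarith)
qed

lemma gem_rate_ge_iff: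
  assumes "x \<in> simplex_n n"
  shows "ereal c \<le> gem_rate n x \<longleftrightarrow> 1 - (\<Sum>k<n. x k) \<le> exp (- c)"
proof (cases "(\<Sum>k<n. x k) < 1")
  case True
  then have "ereal c \<le> gem_rate n x \<longleftrightarrow> ln (1 - (\<Sum>k<n. x k)) \<le> ln (exp (- c))"
    using assms by (auto simp: gem_rate_eq)
  then show ?thesis
    using True by (subst (asm) ln_le_cancel_iff) auto
next
  case False
  then show ?thesis
    using simplex_n_sum_bounds(2)[OF assms] exp_gt_zero[of "- c"] by (simp add: gem_rate_def, linarith)
qed

lemma rate_function_gem_rate: "rate_function (subtopology euclidean (simplex_n n)) (gem_rate n)"
  unfolding rate_function_def
proof (intro conjI allI ballI)
  fix x
  assume "x \<in> topspace (subtopology euclidean (simplex_n n))"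
  then show "0 \<le> gem_rate n x"
    using gem_rate_ge_iff[of x n 0] simplex_n_sum_bounds(1)[of x n] by (simp add: zero_ereal_def)
next
  fix c :: real
  have "{x \<in> topspace (subtopology euclidean (simplex_n n)). gem_rate n x \<le> ereal c}
      = simplex_n n \<inter> {x. (\<Sum>k<n. x k) \<le> 1 - exp (- c)}"
    using gem_rate_le_iff by auto
  moreover have "closed {x::nat \<Rightarrow> real. (\<Sum>k<n. x k) \<le> 1 - exp (- c)}"
    by (intro closed_Collect_le continuous_on_const continuous_on_sum continuous_on_product_coordinates)
  ultimately show "closedin (subtopology euclidean (simplex_n n))
      {x \<in> topspace (subtopology euclidean (simplex_n n)). gem_rate n x \<le> ereal c}"
    by (simp add: closedin_closed_Int)
qed

section \<open>Lower bound\<close>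

lemma open_fun_contains_cylinder:
  fixes T :: "(nat \<Rightarrow> real) set"
  assumes "open T" "x \<in> T"
  shows "\<exists>e>0. \<forall>z. (\<forall>k. z k \<noteq> x k \<longrightarrow> k < n) \<and> (\<forall>k<n. \<bar>z k - x k\<bar> < e) \<longrightarrow> z \<in> T"
proof -
  have "openin (product_topology (\<lambda>i. euclidean) UNIV) T"
    using assms(1) by (simp add: open_fun_def)
  then obtain U where U: "finite {i. U i \<noteq> UNIV}" "\<And>i. open (U i)" "x \<in> Pi\<^sub>E UNIV U" "Pi\<^sub>E UNIV U \<subseteq> T"
    using assms(2) unfolding openin_product_topology_alt by auto
  have "\<forall>i. \<exists>e>0. ball (x i) e \<subseteq> U i"
  proof
    fix i
    have "x i \<in> U i"
      using U(3) by auto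
    then show "\<exists>e>0. ball (x i) e \<subseteq> U i"
      using U(2)[of i] open_contains_ball by auto
  qed
  then obtain e where e: "\<And>i. e i > 0" "\<And>i. ball (x i) (e i) \<subseteq> U i"
    by metis
  define F where "F = {i. U i \<noteq> UNIV}"
  define \<epsilon> where "\<epsilon> = Min (insert 1 (e ` F))"
  have fin: "finite (insert 1 (e ` F))"
    using U(1) F_def by simp
  have "\<epsilon> > 0"
    unfolding \<epsilon>_def using fin e(1) by (subst Min_gr_iff) auto
  moreover have "z \<in> T" if z: "\<forall>k. z k \<noteq> x k \<longrightarrow> k < n" "\<forall>k<n. \<bar>z k - x k\<bar> < \<epsilon>" for z
  proof -
    have "z i \<in> U i" for i
    proof (cases "i \<in> F \<and> z i \<noteq> x i")
      case True
      have "\<epsilon> \<le> e i"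
        unfolding \<epsilon>_def using fin True by (intro Min_le) auto
      then have "z i \<in> ball (x i) (e i)"
        using z True by (auto simp: dist_real_def abs_minus_commute)
      then show ?thesis
        using e(2) by blast
    next
      case False
      then show ?thesis
        using U(3) by (auto simp: F_def)
    qed
    then have "z \<in> Pi\<^sub>E UNIV U"
      by auto
    then show ?thesis
      using U(4) by auto
  qed
  ultimately show ?thesis
    by blast
qed

definition gem_inverse :: "(nat \<Rightarrow> real) \<Rightarrow> nat \<Rightarrow> real" where
  "gem_inverse x k = x k / (1 - (\<Sum>i<k. x i))"

context
  fixes n :: nat and x :: "nat \<Rightarrow> real"
  assumes in_simplex: "x \<in> simplex_n n" and sum_less_1: "(\<Sum>k<n. x k) < 1"
begin

private lemma partial_sum_bounds:
  assumes "k \<le> n"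
  shows "0 \<le> (\<Sum>i<k. x i)" "(\<Sum>i<k. x i) < 1"
proof -
  have "\<And>i. 0 \<le> x i"
    using in_simplex by (simp add: simplex_n_def)
  moreover have "(\<Sum>i<k. x i) \<le> (\<Sum>i<n. x i)"
    using assms calculation by (intro sum_mono2) auto
  ultimately show "0 \<le> (\<Sum>i<k. x i)" "(\<Sum>i<k. x i) < 1"
    using sum_less_1 by (auto intro: sum_nonneg)
qed

lemma prod_one_minus_gem_inverse:
  "k \<le> n \<Longrightarrow> (\<Prod>i<k. 1 - gem_inverse x i) = 1 - (\<Sum>i<k. x i)"
proof (induction k)
  case (Suc k)
  then have "(\<Sum>i<k. x i) < 1"
    by (intro partial_sum_bounds) simp
  then have "(\<Prod>i<Suc k. 1 - gem_inverse x i)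
      = (1 - (\<Sum>i<k. x i)) * (1 - x k / (1 - (\<Sum>i<k. x i)))"
    using Suc by (simp add: gem_inverse_def)
  also have "\<dots> = 1 - (\<Sum>i<Suc k. x i)"
    using \<open>(\<Sum>i<k. x i) < 1\<close> by (simp add: field_simps)
  finally show ?case .
qed simp

lemma gem_map_gem_inverse: "k < n \<Longrightarrow> gem_map n (gem_inverse x) k = x k"
  using partial_sum_bounds[of k] prod_one_minus_gem_inverse[of k]
  by (simp add: gem_map_def gem_inverse_def)

lemma gem_inverse_bounds:
  assumes "k < n"
  shows "0 \<le> gem_inverse x k" "gem_inverse x k < 1"
proof -
  have "0 \<le> x k"
    using in_simplex by (simp add: simplex_n_def)
  moreover have "(\<Sum>i<k. x i) < 1" "(\<Sum>i<Suc k. x i) < 1"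
    using assms partial_sum_bounds(2)[of k] partial_sum_bounds(2)[of "Suc k"] by simp_all
  ultimately show "0 \<le> gem_inverse x k" "gem_inverse x k < 1"
    by (simp_all add: gem_inverse_def divide_less_eq)
qed

end

lemma measure_gem_law_ge_prod:
  assumes "1 \<le> t" "S \<in> sets borel" "\<And>k. k < n \<Longrightarrow> A k \<in> sets borel"
    and "gem_map n ` Pi\<^sub>E {..<n} A \<subseteq> S"
  shows "(\<Prod>k<n. measure (beta1 t) (A k)) \<le> measure (gem_law n t) S"
proof -
  let ?M = "PiM {..<n} (\<lambda>_. beta1 t)"
  interpret finite_measure ?M
    using assms(1) by (intro finite_measure_PiM_power finite_measure_beta1) auto
  have "(\<Prod>k<n. measure (beta1 t) (A k)) = measure ?M (Pi\<^sub>E {..<n} A)"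
    using assms(1,3) by (subst measure_PiM_PiE_power) (auto intro: finite_measure_beta1)
  also have "\<dots> \<le> measure ?M (gem_map n -` S \<inter> space ?M)"
    using assms(4) gem_map_measurable assms(2)
    by (intro finite_measure_mono) (auto simp: space_PiM PiE_iff)
  also have "\<dots> = measure (gem_law n t) S"
    unfolding gem_law_def using gem_map_measurable assms(2) by (rule measure_distr[symmetric])
  finally show ?thesis .
qed

lemma powr_le_measure_beta1_Ioc:
  assumes "1 \<le> t" "0 \<le> a" "0 < d" "a + d < 1" "1 \<le> t * d"
  shows "(1 - (a + d)) powr t \<le> measure (beta1 t) {a<..a + d}"
proof -
  have "(1 - (a + d)) powr t \<le> (1 - (a + d)) powr (t - 1)"
    using assms by (intro powr_mono') auto
  also have "\<dots> \<le> t * d * (1 - (a + d)) powr (t - 1)"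
    using assms(5) by (simp add: mult_le_cancel_right1)
  also have "\<dots> \<le> measure (beta1 t) {a<..a + d}"
    using measure_beta1_Ioc_ge[of t a "a + d"] assms by (simp add: mult_ac)
  finally show ?thesis .
qed

lemma abs_gem_map_diff_le_box:
  assumes "\<And>k. k < n \<Longrightarrow> 0 \<le> u k \<and> u k + d \<le> 1" "v \<in> Pi\<^sub>E {..<n} (\<lambda>k. {u k<..u k + d})"
  shows "\<bar>gem_map n v k - gem_map n u k\<bar> \<le> n * d"
proof -
  have v: "u i < v i \<and> v i \<le> u i + d" if "i < n" for i
    using assms(2) that by (auto simp: PiE_iff)
  have "\<bar>gem_map n v k - gem_map n u k\<bar> \<le> (\<Sum>i<n. \<bar>v i - u i\<bar>)"
    using assms(1) v by (intro abs_gem_map_diff_le) fastforce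
  also have "\<dots> \<le> (\<Sum>i<n. d)"
    using v by (intro sum_mono) fastforce
  finally show ?thesis
    by simp
qed

lemma exists_shift_prod_one_minus_gt:
  fixes u :: "nat \<Rightarrow> real"
  assumes "\<And>k. k < n \<Longrightarrow> u k < 1" "c < (\<Prod>k<n. 1 - u k)" "0 < e"
  shows "\<exists>d>0. real n * d < e \<and> (\<forall>k<n. u k + d < 1) \<and> c < (\<Prod>k<n. 1 - (u k + d))"
proof -
  have "((\<lambda>d. \<Prod>k<n. 1 - (u k + d)) \<longlongrightarrow> (\<Prod>k<n. 1 - (u k + 0))) (at_right 0)"
    by (intro tendsto_intros)
  then have "eventually (\<lambda>d. c < (\<Prod>k<n. 1 - (u k + d))) (at_right 0)"
    using assms(2) by (intro order_tendstoD) auto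
  moreover have "eventually (\<lambda>d. \<forall>k\<in>{..<n}. u k + d < 1) (at_right 0)"
  proof (intro eventually_ball_finite ballI)
    fix k
    assume "k \<in> {..<n}"
    have "((\<lambda>d. u k + d) \<longlongrightarrow> u k + 0) (at_right 0)"
      by (intro tendsto_intros)
    then show "eventually (\<lambda>d. u k + d < 1) (at_right 0)"
      using assms(1) \<open>k \<in> {..<n}\<close> by (intro order_tendstoD) auto
  qed simp
  moreover have "((\<lambda>d. real n * d) \<longlongrightarrow> real n * 0) (at_right 0)"
    by (intro tendsto_intros)
  then have "eventually (\<lambda>d. real n * d < e) (at_right 0)"
    using assms(3) by (intro order_tendstoD) auto
  moreover have "eventually (\<lambda>d. 0 < d) (at_right (0::real))"
    by (simp add: eventually_at_right_less)
  ultimately have "eventually (\<lambda>d. 0 < d \<and> real n * d < e \<and> (\<forall>k<n. u k + d < 1)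
      \<and> c < (\<Prod>k<n. 1 - (u k + d))) (at_right 0)"
    by eventually_elim auto
  then show ?thesis
    using eventually_happens'[OF trivial_limit_at_right_real] by blast
qed

lemma eventually_powr_le_measure_gem_law_box:
  assumes "S \<in> sets borel" "gem_map n ` Pi\<^sub>E {..<n} (\<lambda>k. {u k<..u k + d}) \<subseteq> S"
    and "0 < d" "\<And>k. k < n \<Longrightarrow> 0 \<le> u k \<and> u k + d < 1"
    and "0 < c" "c \<le> (\<Prod>k<n. 1 - (u k + d))"
  shows "eventually (\<lambda>t. c powr t \<le> measure (gem_law n t) S) at_top"
  using eventually_ge_at_top[of "max 1 (1 / d)"]
proof eventually_elim
  case (elim t)
  then have "1 \<le> t" "1 \<le> t * d"
    using assms(3) by (auto simp: field_simps)
  have "c powr t \<le> (\<Prod>k<n. 1 - (u k + d)) powr t"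
    using assms(5,6) \<open>1 \<le> t\<close> by (intro powr_mono2) auto
  also have "\<dots> = (\<Prod>k<n. (1 - (u k + d)) powr t)"
    using assms(4) by (simp add: prod_powr_distrib)
  also have "\<dots> \<le> (\<Prod>k<n. measure (beta1 t) {u k<..u k + d})"
    using assms(3,4) \<open>1 \<le> t\<close> \<open>1 \<le> t * d\<close>
    by (intro prod_mono conjI powr_le_measure_beta1_Ioc) auto
  also have "\<dots> \<le> measure (gem_law n t) S"
    using assms(1,2) \<open>1 \<le> t\<close> by (intro measure_gem_law_ge_prod) auto
  finally show ?case .
qed

lemma eventually_powr_le_measure_gem_law:
  assumes "open T" "x \<in> T" "x \<in> simplex_n n" "(\<Sum>k<n. x k) < 1"
    and "0 < c" "c < 1 - (\<Sum>k<n. x k)"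
  shows "eventually (\<lambda>t. c powr t \<le> measure (gem_law n t) (simplex_n n \<inter> T)) at_top"
proof -
  define u where "u = gem_inverse x"
  have u: "0 \<le> u k" "u k < 1" "gem_map n u k = x k" if "k < n" for k
    using gem_inverse_bounds gem_map_gem_inverse assms(3,4) that by (simp_all add: u_def)
  obtain e where "e > 0"
    and e: "\<And>z. (\<forall>k. z k \<noteq> x k \<longrightarrow> k < n) \<and> (\<forall>k<n. \<bar>z k - x k\<bar> < e) \<Longrightarrow> z \<in> T"
    using open_fun_contains_cylinder[OF assms(1,2)] by blast
  have "c < (\<Prod>k<n. 1 - u k)"
    using prod_one_minus_gem_inverse[OF assms(3,4)] assms(6) by (simp add: u_def)
  then obtain d where "d > 0" "real n * d < e" and d: "\<And>k. k < n \<Longrightarrow> u k + d < 1"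
    and c_less: "c < (\<Prod>k<n. 1 - (u k + d))"
    using exists_shift_prod_one_minus_gt[of n u c e] u(2) \<open>e > 0\<close> by blast
  have "gem_map n ` Pi\<^sub>E {..<n} (\<lambda>k. {u k<..u k + d}) \<subseteq> simplex_n n \<inter> T"
  proof safe
    fix v
    assume v: "v \<in> Pi\<^sub>E {..<n} (\<lambda>k. {u k<..u k + d})"
    then have "u k < v k \<and> v k \<le> u k + d" if "k < n" for k
      using that by (auto simp: PiE_iff)
    then have "0 \<le> v k \<and> v k \<le> 1" if "k < n" for k
      using that u(1)[OF that] d[OF that] by force
    then show "gem_map n v \<in> simplex_n n"
      by (intro gem_map_in_simplex_n)
    have "\<bar>gem_map n v k - x k\<bar> < e" if "k < n" for k
      using abs_gem_map_diff_le_box[of n u d v k] v u d that \<open>real n * d < e\<close> by fastforce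
    moreover have "gem_map n v k = x k" if "\<not> k < n" for k
      using assms(3) that by (simp add: gem_map_def simplex_n_def)
    ultimately show "gem_map n v \<in> T"
      by (intro e) auto
  qed
  then show ?thesis
    using \<open>d > 0\<close> u(1) d assms(5) c_less closed_simplex_n assms(1)
    by (intro eventually_powr_le_measure_gem_law_box) auto
qed

section \<open>Upper bound\<close>

text \<open>The value \<open>\<top>\<close> off \<open>{0<..<1}\<close>, a null set for \<open>beta1 t\<close>, makes the pointwise
  Markov bound below hold everywhere.\<close>
definition beta1_tilt :: "real \<Rightarrow> real \<Rightarrow> ennreal" where
  "beta1_tilt t v = (if v \<in> {0<..<1} then ennreal ((1 - v) powr (1 - t)) else \<top>)"

lemma beta1_tilt_measurable [measurable]: "beta1_tilt t \<in> borel_measurable borel"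
  unfolding beta1_tilt_def by measurable

lemma nn_integral_beta1_tilt:
  assumes "0 \<le> t"
  shows "(\<integral>\<^sup>+v. beta1_tilt t v \<partial>beta1 t) = ennreal t"
proof -
  have "(\<integral>\<^sup>+v. beta1_tilt t v \<partial>beta1 t)
      = (\<integral>\<^sup>+v. ennreal (indicator {0<..<1} v * t * (1 - v) powr (t - 1)) * beta1_tilt t v \<partial>lborel)"
    unfolding beta1_def by (subst nn_integral_density) auto
  also have "\<dots> = (\<integral>\<^sup>+(v::real). ennreal (t * indicator {0<..<1} v) \<partial>lborel)"
  proof (rule nn_integral_cong)
    fix v :: real
    show "ennreal (indicator {0<..<1} v * t * (1 - v) powr (t - 1)) * beta1_tilt t v
        = ennreal (t * indicator {0<..<1} v)"
    proof (cases "v \<in> {0<..<1}")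
      case True
      then have "(1 - v) powr (t - 1) * (1 - v) powr (1 - t) = 1"
        by (simp flip: powr_add)
      then show ?thesis
        using True assms by (simp add: beta1_tilt_def mult.assoc flip: ennreal_mult'')
    qed (simp add: beta1_tilt_def)
  qed
  also have "\<dots> = ennreal t"
    using assms by (rule nn_integral_indicator_Ioo_01)
  finally show ?thesis .
qed

lemma one_le_powr_mult_prod_beta1_tilt:
  fixes n :: nat
  assumes "1 \<le> t" "0 < q" "(\<Prod>i<n. 1 - u i) \<le> q"
  shows "1 \<le> ennreal (q powr (t - 1)) * (\<Prod>i<n. beta1_tilt t (u i))"
proof (cases "\<forall>i<n. u i \<in> {0<..<1}")
  case True
  define P where "P = (\<Prod>i<n. 1 - u i)"
  have "0 < P"
    unfolding P_def using True by (intro prod_pos) auto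
  have "(\<Prod>i<n. beta1_tilt t (u i)) = ennreal (\<Prod>i<n. (1 - u i) powr (1 - t))"
    using True by (simp add: beta1_tilt_def prod_ennreal)
  also have "\<dots> = ennreal (P powr (1 - t))"
    by (simp add: P_def prod_powr_distrib)
  finally have tilt: "(\<Prod>i<n. beta1_tilt t (u i)) = ennreal (P powr (1 - t))" .
  have "1 = P powr (t - 1) * P powr (1 - t)"
    using \<open>0 < P\<close> by (simp flip: powr_add)
  also have "\<dots> \<le> q powr (t - 1) * P powr (1 - t)"
    using \<open>0 < P\<close> assms by (intro mult_right_mono powr_mono2) (auto simp: P_def)
  finally show ?thesis
    unfolding tilt by (simp add: ennreal_mult'' flip: ennreal_1 ennreal_le_iff)
next
  case False
  then obtain j where "j < n" "u j \<notin> {0<..<1}"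
    by auto
  then have "(\<Prod>i<n. beta1_tilt t (u i)) = \<top>"
    unfolding ennreal_prod_eq_top by (auto simp: beta1_tilt_def)
  then show ?thesis
    using assms(2) by (simp add: ennreal_mult_top)
qed

lemma measure_gem_law_le:
  assumes "1 \<le> t" "0 < q" "C \<in> sets borel" "\<And>x. x \<in> C \<Longrightarrow> 1 - (\<Sum>k<n. x k) \<le> q"
  shows "measure (gem_law n t) C \<le> t ^ n * q powr (t - 1)"
proof -
  let ?M = "PiM {..<n} (\<lambda>_. beta1 t)"
  interpret product_sigma_finite "\<lambda>_. beta1 t"
    using finite_measure_beta1[OF assms(1)]
    by (simp add: product_sigma_finite_def finite_measure_def)
  let ?A = "gem_map n -` C \<inter> space ?M"
  have "emeasure (gem_law n t) C = (\<integral>\<^sup>+u. indicator ?A u \<partial>?M)"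
    unfolding gem_law_def using gem_map_measurable assms(3)
    by (simp add: emeasure_distr measurable_sets)
  also have "\<dots> \<le> (\<integral>\<^sup>+u. ennreal (q powr (t - 1)) * (\<Prod>i<n. beta1_tilt t (u i)) \<partial>?M)"
  proof (rule nn_integral_mono)
    fix u
    show "indicator ?A u \<le> ennreal (q powr (t - 1)) * (\<Prod>i<n. beta1_tilt t (u i))"
      using assms(4)[of "gem_map n u"] one_le_powr_mult_prod_beta1_tilt[OF assms(1,2)]
      by (auto simp: sum_gem_map indicator_def)
  qed
  also have "\<dots> = ennreal (q powr (t - 1)) * (\<Prod>i<n. \<integral>\<^sup>+v. beta1_tilt t v \<partial>beta1 t)"
    by (subst nn_integral_cmult, measurable, subst product_nn_integral_prod) auto
  also have "\<dots> = ennreal (t ^ n * q powr (t - 1))"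
    using assms(1) by (simp add: nn_integral_beta1_tilt ennreal_power ennreal_mult'' mult.commute)
  finally have "emeasure (gem_law n t) C \<le> ennreal (t ^ n * q powr (t - 1))" .
  then show ?thesis
    unfolding measure_def using assms(1,2) by (intro enn2real_leI) auto
qed

section \<open>The large deviation principle\<close>

lemma ldp_log_le:
  assumes "0 < t" "0 \<le> p" "p \<le> b"
  shows "ldp_log t p \<le> ereal (ln b / t)"
  using assms by (auto simp: ldp_log_def intro!: divide_right_mono)

lemma ldp_log_ge:
  assumes "0 < t" "0 < b" "b \<le> p"
  shows "ereal (ln b / t) \<le> ldp_log t p"
  using assms by (auto simp: ldp_log_def intro!: divide_right_mono)

lemma limsup_ldp_log_gem_law_le:
  assumes "0 < q" "C \<in> sets borel" "\<And>x. x \<in> C \<Longrightarrow> 1 - (\<Sum>k<n. x k) \<le> q"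
  shows "Limsup at_top (\<lambda>t. ldp_log t (measure (gem_law n t) C)) \<le> ereal (ln q)"
proof -
  have "eventually (\<lambda>t. ldp_log t (measure (gem_law n t) C)
      \<le> ereal ((real n * ln t + (t - 1) * ln q) / t)) at_top"
    using eventually_ge_at_top[of 1]
  proof eventually_elim
    case (elim t)
    then have "ldp_log t (measure (gem_law n t) C) \<le> ereal (ln (t ^ n * q powr (t - 1)) / t)"
      using assms by (intro ldp_log_le measure_gem_law_le) auto
    also have "ln (t ^ n * q powr (t - 1)) = real n * ln t + (t - 1) * ln q"
      using elim assms(1) by (simp add: ln_mult ln_realpow ln_powr)
    finally show ?case .
  qed
  then have "Limsup at_top (\<lambda>t. ldp_log t (measure (gem_law n t) C))
      \<le> Limsup at_top (\<lambda>t. ereal ((real n * ln t + (t - 1) * ln q) / t))"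
    by (rule Limsup_mono)
  also have "\<dots> = ereal (ln q)"
    by (intro lim_imp_Limsup) (simp_all add: lim_ereal, real_asymp)
  finally show ?thesis .
qed

lemma liminf_ldp_log_gem_law_ge:
  assumes "open T" "x \<in> T" "x \<in> simplex_n n" "(\<Sum>k<n. x k) < 1"
  shows "ereal (ln (1 - (\<Sum>k<n. x k)))
    \<le> Liminf at_top (\<lambda>t. ldp_log t (measure (gem_law n t) (simplex_n n \<inter> T)))"
proof (rule dense_le)
  fix y
  assume y: "y < ereal (ln (1 - (\<Sum>k<n. x k)))"
  show "y \<le> Liminf at_top (\<lambda>t. ldp_log t (measure (gem_law n t) (simplex_n n \<inter> T)))"
  proof (cases y)
    case (real r)
    then have "exp r < exp (ln (1 - (\<Sum>k<n. x k)))"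
      using y by simp
    then have "exp r < 1 - (\<Sum>k<n. x k)"
      using assms(4) by simp
    then have "eventually (\<lambda>t. exp r powr t \<le> measure (gem_law n t) (simplex_n n \<inter> T)) at_top"
      by (rule eventually_powr_le_measure_gem_law[OF assms exp_gt_zero])
    then have "eventually (\<lambda>t. ereal r \<le> ldp_log t (measure (gem_law n t) (simplex_n n \<inter> T))) at_top"
      using eventually_gt_at_top[of 0]
    proof eventually_elim
      case (elim t)
      then show ?case
        using ldp_log_ge[of t "exp r powr t"] by (simp add: ln_powr)
    qed
    then show ?thesis
      using real by (simp add: Liminf_bounded)
  qed (use y in auto)
qed

lemma gem_law_ldp_upper_bound:
  assumes "closedin (subtopology euclidean (simplex_n n)) C"
  shows "Limsup at_top (\<lambda>t. ldp_log t (measure (gem_law n t) C)) \<le> - (INF x\<in>C. gem_rate n x)"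
proof -
  from assms have C: "C \<in> sets borel" "C \<subseteq> simplex_n n"
    by (auto simp: closedin_closed intro: borel_closed closed_Int closed_simplex_n)
  show ?thesis
  proof (rule ereal_le_real)
    fix z
    assume "- (INF x\<in>C. gem_rate n x) \<le> ereal z"
    then have "ereal (- z) \<le> gem_rate n x" if "x \<in> C" for x
      using INF_lower[OF that, of "gem_rate n"] by (simp add: ereal_uminus_le_reorder)
    then have "1 - (\<Sum>k<n. x k) \<le> exp z" if "x \<in> C" for x
      using gem_rate_ge_iff[of x n "- z"] C(2) that by auto
    then show "Limsup at_top (\<lambda>t. ldp_log t (measure (gem_law n t) C)) \<le> ereal z"
      using limsup_ldp_log_gem_law_le[of "exp z" C n] C(1) by simp
  qed
qed

lemma gem_law_ldp_lower_bound:
  assumes "openin (subtopology euclidean (simplex_n n)) G"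
  shows "- (INF x\<in>G. gem_rate n x) \<le> Liminf at_top (\<lambda>t. ldp_log t (measure (gem_law n t) G))"
proof -
  from assms obtain T where T: "open T" "G = simplex_n n \<inter> T"
    by (auto simp: openin_open)
  have "- gem_rate n x \<le> Liminf at_top (\<lambda>t. ldp_log t (measure (gem_law n t) G))" if "x \<in> G" for x
  proof (cases "(\<Sum>k<n. x k) < 1")
    case True
    then show ?thesis
      using liminf_ldp_log_gem_law_ge[OF T(1), of x n] gem_rate_eq[of x n] T that by auto
  qed (simp add: gem_rate_def)
  then show ?thesis
    unfolding ereal_Sup_uminus_image_eq[symmetric] image_image by (rule SUP_least)
qed

theorem lemma2p1:
  fixes n :: nat
  assumes "n \<ge> 1"
  shows "LDP (subtopology euclidean (simplex_n n)) (gem_law n) (gem_rate n)"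
  unfolding LDP_def
  using rate_function_gem_rate gem_law_ldp_upper_bound gem_law_ldp_lower_bound by blast

end
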